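(* Let $(T(t))_{t\ge0}$ be a bounded $C_0$-semigroup on a Banach space $E$, and let $t_1,\dots,t_n>0$. Then $$E_{\mathrm{aap}}\cap\ker(T(t_1)-\mathrm{Id})\cdots(T(t_n)-\mathrm{Id})=\ker(T(t_1)-\mathrm{Id})+\cdots+\ker(T(t_n)-\mathrm{Id}).$$
   Context: $E_{\mathrm{aap}}$ is the set of asymptotically almost periodic vectors, i.e. those $x\in E$ whose orbit $\{T(t)x:t\ge0\}$ is relatively compact in $E$. *)

theory Defs
  imports "HOL-Analysis.Analysis"
begin

definition c0_semigroup :: "(real \<Rightarrow> 'a::banach \<Rightarrow> 'a) \<Rightarrow> bool" where
  "c0_semigroup T \<longleftrightarrow>
     (\<forall>t\<ge>0. bounded_linear (T t)) \<and>
     T 0 = id \<and>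
     (\<forall>s\<ge>0. \<forall>t\<ge>0. T (s + t) = T s \<circ> T t) \<and>
     (\<forall>x. ((\<lambda>t. T t x) \<longlongrightarrow> x) (at_right 0))"

definition bounded_semigroup :: "(real \<Rightarrow> 'a::real_normed_vector \<Rightarrow> 'a) \<Rightarrow> bool" where
  "bounded_semigroup T \<longleftrightarrow> (\<exists>M. \<forall>t\<ge>0. onorm (T t) \<le> M)"

definition E_aap :: "(real \<Rightarrow> 'a::real_normed_vector \<Rightarrow> 'a) \<Rightarrow> 'a set" where
  "E_aap T = {x. compact (closure ((\<lambda>t. T t x) ` {0..}))}"

fun prod_ops :: "(real \<Rightarrow> 'a::real_normed_vector \<Rightarrow> 'a) \<Rightarrow> (nat \<Rightarrow> real) \<Rightarrow> nat \<Rightarrow> 'a \<Rightarrow> 'a" where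
  "prod_ops T t 0 = id"
| "prod_ops T t (Suc n) = prod_ops T t n \<circ> (\<lambda>x. T (t n) x - x)"

definition kernel_of :: "('a \<Rightarrow> 'b::zero) \<Rightarrow> 'a set" where
  "kernel_of A = {x. A x = 0}"

end

theory Submission
  imports Defs
begin

text \<open>Let x be asymptotically almost periodic with Q (T(a) x - x) = 0, where
  Q is the product of the first n - 1 factors and a = t n, so that Q x is fixed by T(a). The
  ergodic means of x along T(0), T(a), T(2a), ... lie in the closed convex hull of the orbit of
  x, which is compact by Mazur's theorem. A limit point p of the means is fixed by T(a),
  satisfies Q p = Q x (the means commute with Q and fix Q x), and has its orbit in that compact
  hull. Hence x - p is asymptotically almost periodic and lies in the kernel of Q, and the
  induction hypothesis applies to it. Conversely, a vector y fixed by T(a) with a > 0 has the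
  compact orbit {T(s) y | 0 \<le> s \<le> a} and is annihilated by the factor T(a) - Id.\<close>

lemma compact_closure_subset_compact:
  fixes K :: "'a::metric_space set"
  assumes "compact K" "A \<subseteq> K"
  shows "compact (closure A)"
proof -
  have "closure A \<subseteq> K"
    using assms by (simp add: closure_minimal compact_imp_closed)
  then show ?thesis
    using compact_Int_closed[OF assms(1) closed_closure, of A] by (simp add: Int_absorb1)
qed

lemma compact_closure_convex_hull:
  fixes K :: "'a::banach set"
  assumes "compact K"
  shows "compact (closure (convex hull K))"
proof -
  have "\<exists>G. finite G \<and> closure (convex hull K) \<subseteq> (\<Union>x\<in>G. ball x e)" if e: "e > 0" for e
  proof -
    have e3: "e/3 > 0" using e by simp
    obtain F where F: "finite F" "K \<subseteq> (\<Union>x\<in>F. ball x (e/3))"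
      using assms e3 unfolding compact_eq_totally_bounded by blast
    obtain G where G: "finite G" "convex hull F \<subseteq> (\<Union>x\<in>G. ball x (e/3))"
      using finite_imp_compact_convex_hull[OF F(1)] e3 unfolding compact_eq_totally_bounded by blast
    let ?C = "\<Union>x\<in>convex hull F. \<Union>y\<in>ball 0 (e/3). {x + y}"
    have "K \<subseteq> ?C"
    proof
      fix y assume "y \<in> K"
      then obtain f where "f \<in> F" "dist f y < e/3" using F by auto
      then have "f \<in> convex hull F" "y - f \<in> ball 0 (e/3)"
        by (simp_all add: hull_inc dist_norm norm_minus_commute)
      moreover have "y = f + (y - f)" by simp
      ultimately show "y \<in> ?C" by blast
    qed
    then have "convex hull K \<subseteq> ?C"
      using convex_sums[of "convex hull F" "ball 0 (e/3)"] by (simp add: hull_minimal)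
    also have "?C \<subseteq> (\<Union>x\<in>G. cball x (2*e/3))"
    proof
      fix z assume "z \<in> ?C"
      then obtain a b where ab: "z = a + b" "a \<in> convex hull F" "norm b < e/3" by auto
      then obtain g where g: "g \<in> G" "dist g a < e/3" using G by auto
      have "dist g z \<le> dist g a + norm b"
        using dist_triangle[of g z a] ab(1) by (simp add: dist_norm)
      then show "z \<in> (\<Union>x\<in>G. cball x (2*e/3))" using g ab by force
    qed
    finally have "closure (convex hull K) \<subseteq> (\<Union>x\<in>G. cball x (2*e/3))"
      using G(1) by (intro closure_minimal) (simp_all add: closed_UN)
    also have "\<dots> \<subseteq> (\<Union>x\<in>G. ball x e)"
      using e by (intro UN_mono) (auto simp: subset_cball)
    finally show ?thesis using G(1) by blast
  qed
  moreover have "complete (closure (convex hull K))"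
    by (simp add: complete_eq_closed)
  ultimately show ?thesis
    by (subst compact_eq_totally_bounded) simp
qed

lemma E_aap_if_orbit_subset_compact:
  assumes "compact K" "\<And>s. s \<ge> 0 \<Longrightarrow> T s x \<in> K"
  shows "x \<in> E_aap T"
  unfolding E_aap_def using assms by (auto intro: compact_closure_subset_compact)

definition ergodic_mean :: "(real \<Rightarrow> 'a \<Rightarrow> 'a::real_vector) \<Rightarrow> real \<Rightarrow> nat \<Rightarrow> 'a \<Rightarrow> 'a" where
  "ergodic_mean T a N y = (1 / real (Suc N)) *\<^sub>R (\<Sum>k<Suc N. T (real k * a) y)"

lemma ergodic_mean_commute:
  assumes "linear L" "\<And>k. L (T (real k * a) y) = T (real k * a) (L y)"
  shows "L (ergodic_mean T a N y) = ergodic_mean T a N (L y)"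
  unfolding ergodic_mean_def using assms(2)
  by (simp only: linear_scale[OF assms(1)] linear_sum[OF assms(1)])

lemma ergodic_mean_in_convex_hull_orbit:
  assumes "a \<ge> 0"
  shows "ergodic_mean T a N y \<in> convex hull ((\<lambda>s. T s y) ` {0..})"
  unfolding ergodic_mean_def scaleR_sum_right
  using assms by (intro convex_sum) (auto intro: hull_inc)

locale C0_semigroup =
  fixes T :: "real \<Rightarrow> 'a::banach \<Rightarrow> 'a"
  assumes c0: "c0_semigroup T"
begin

lemma bounded_linear_T: "s \<ge> 0 \<Longrightarrow> bounded_linear (T s)"
  using c0 unfolding c0_semigroup_def by blast

lemma linear_T: "s \<ge> 0 \<Longrightarrow> linear (T s)"
  using bounded_linear_T bounded_linear.linear by blast

lemma T_0 [simp]: "T 0 x = x"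
  using c0 unfolding c0_semigroup_def by simp

lemma T_add: "s \<ge> 0 \<Longrightarrow> u \<ge> 0 \<Longrightarrow> T (s + u) x = T s (T u x)"
  using c0 unfolding c0_semigroup_def by simp

lemma T_commute: "s \<ge> 0 \<Longrightarrow> u \<ge> 0 \<Longrightarrow> T s (T u x) = T u (T s x)"
  using T_add[of s u x] T_add[of u s x] by (simp add: add.commute)

lemma T_tendsto_at_right_0: "((\<lambda>h. T h x) \<longlongrightarrow> x) (at_right 0)"
  using c0 unfolding c0_semigroup_def by blast

lemma T_multiple_fixed: "a \<ge> 0 \<Longrightarrow> T a y = y \<Longrightarrow> T (real k * a) y = y"
proof (induction k)
  case (Suc k)
  then have "T (a + real k * a) y = y" by (simp add: T_add)
  then show ?case by (simp add: algebra_simps)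
qed simp

lemma ergodic_mean_fixed:
  assumes "a \<ge> 0" "T a y = y"
  shows "ergodic_mean T a N y = y"
  unfolding ergodic_mean_def using T_multiple_fixed[OF assms]
  by (simp del: sum.lessThan_Suc add: sum_constant_scaleR)

lemma ergodic_mean_defect:
  assumes "a \<ge> 0"
  shows "T a (ergodic_mean T a N y) - ergodic_mean T a N y
         = (1 / real (Suc N)) *\<^sub>R (T (real (Suc N) * a) y - y)"
proof -
  define f where "f k = T (real k * a) y" for k
  have shift: "T a (f k) = f (Suc k)" for k
    using T_add[of a "real k * a" y] assms unfolding f_def by (simp add: algebra_simps)
  have "T a (\<Sum>k<Suc N. f k) - (\<Sum>k<Suc N. f k) = f (Suc N) - f 0"
    by (simp only: linear_sum[OF linear_T[OF assms]] shift sum_subtractf[symmetric]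
        sum_lessThan_telescope)
  then show ?thesis
    unfolding ergodic_mean_def f_def[symmetric]
    by (simp add: linear_scale[OF linear_T[OF assms]] scaleR_diff_right[symmetric] f_def)
qed

lemma T_ergodic_mean_in_convex_hull_orbit:
  assumes "a \<ge> 0" "s \<ge> 0"
  shows "T s (ergodic_mean T a N x) \<in> convex hull ((\<lambda>u. T u x) ` {0..})"
proof -
  have "T s (ergodic_mean T a N x) = ergodic_mean T a N (T s x)"
    using assms by (intro ergodic_mean_commute linear_T T_commute) auto
  also have "\<dots> \<in> convex hull ((\<lambda>u. T u (T s x)) ` {0..})"
    using assms by (intro ergodic_mean_in_convex_hull_orbit)
  also have "\<dots> \<subseteq> convex hull ((\<lambda>u. T u x) ` {0..})"
    using assms by (intro hull_mono) (auto simp: T_add[symmetric] intro!: image_eqI[of _ _ "_ + s"])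
  finally show ?thesis .
qed

lemma bounded_linear_prod_ops: "\<forall>i<n. t i \<ge> 0 \<Longrightarrow> bounded_linear (prod_ops T t n)"
proof (induction n)
  case (Suc n)
  have factor: "bounded_linear (\<lambda>x. T (t n) x - x)"
    using Suc.prems by (intro bounded_linear_sub bounded_linear_T bounded_linear_ident) auto
  have "bounded_linear (\<lambda>x. prod_ops T t n (T (t n) x - x))"
    using Suc by (intro bounded_linear_compose[OF _ factor]) auto
  then show ?case by (simp add: o_def)
qed (simp only: prod_ops.simps id_def bounded_linear_ident)

lemma prod_ops_commute:
  "\<forall>i<n. t i \<ge> 0 \<Longrightarrow> s \<ge> 0 \<Longrightarrow> prod_ops T t n (T s y) = T s (prod_ops T t n y)"
proof (induction n arbitrary: y)
  case (Suc n)
  have "t n \<ge> 0" using Suc.prems(1) by simp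
  then have "T (t n) (T s y) - T s y = T s (T (t n) y - y)"
    using T_commute[of "t n" s y] linear_diff[OF linear_T[OF Suc.prems(2)]] Suc.prems(2) by simp
  then show ?case using Suc by simp
qed simp

lemma prod_ops_eq_0_if_fixed:
  "\<forall>i<n. t i \<ge> 0 \<Longrightarrow> i < n \<Longrightarrow> T (t i) z = z \<Longrightarrow> prod_ops T t n z = 0"
proof (induction n arbitrary: z)
  case (Suc n)
  show ?case
  proof (cases "i = n")
    case True
    then show ?thesis
      using Suc.prems bounded_linear_prod_ops[of n t] linear_0 bounded_linear.linear by fastforce
  next
    case False
    then have i: "i < n" using Suc.prems by simp
    have "T (t i) (T (t n) z - z) = T (t n) z - z"
      using Suc.prems i linear_diff[OF linear_T[of "t i"]] T_commute[of "t i" "t n" z] by simp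
    then show ?thesis using Suc.IH[OF _ i] Suc.prems by simp
  qed
qed simp

end

locale bounded_C0_semigroup = C0_semigroup +
  assumes bounded: "bounded_semigroup T"
begin

lemma norm_T_bound:
  obtains M where "M > 0" "\<And>s y. s \<ge> 0 \<Longrightarrow> norm (T s y) \<le> M * norm y"
proof -
  obtain M0 where M0: "\<forall>s\<ge>0. onorm (T s) \<le> M0"
    using bounded unfolding bounded_semigroup_def by blast
  have "norm (T s y) \<le> max M0 1 * norm y" if "s \<ge> 0" for s y
    using onorm[OF bounded_linear_T[OF that], of y] M0 that
    by (meson max.cobounded1 mult_right_mono norm_ge_zero order_trans)
  then show ?thesis using that[of "max M0 1"] by simp
qed

lemma continuous_on_orbit: "continuous_on {0..} (\<lambda>s. T s x)"
proof -
  obtain M where M: "M > 0" "\<And>s y. s \<ge> 0 \<Longrightarrow> norm (T s y) \<le> M * norm y"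
    using norm_T_bound by blast
  have dist_le: "dist (T u x) (T s x) \<le> M * dist (T \<bar>u - s\<bar> x) x"
    if "u \<ge> 0" "s \<ge> 0" for u s
  proof -
    have "dist (T v x) (T w x) \<le> M * dist (T (w - v) x) x" if "0 \<le> v" "v \<le> w" for v w
    proof -
      have "T w x - T v x = T v (T (w - v) x - x)"
        using T_add[of v "w - v" x] linear_diff[OF linear_T] that by simp
      then show ?thesis using M(2)[of v] that by (metis dist_norm dist_commute)
    qed
    from this[of u s] this[of s u] that show ?thesis
      by (cases "u \<le> s") (simp_all add: dist_commute abs_if)
  qed
  show ?thesis unfolding continuous_on_iff
  proof (intro ballI allI impI)
    fix s e :: real assume s: "s \<in> {0..}" and e: "e > 0"
    obtain b where b: "b > 0" "\<And>h. 0 < h \<Longrightarrow> h < b \<Longrightarrow> dist (T h x) x < e / M"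
      using T_tendsto_at_right_0[unfolded tendsto_iff, rule_format, of "e / M" x] e M(1)
      unfolding eventually_at_right_field by auto
    have "dist (T u x) (T s x) < e" if "u \<in> {0..}" "dist u s < b" for u
    proof -
      have "M * dist (T \<bar>u - s\<bar> x) x < e"
        using b(2)[of "\<bar>u - s\<bar>"] that(2) e M(1)
        by (cases "u = s") (auto simp: dist_real_def pos_less_divide_eq mult.commute)
      then show ?thesis using dist_le[of u s] that s by simp
    qed
    then show "\<exists>d>0. \<forall>u\<in>{0..}. dist u s < d \<longrightarrow> dist (T u x) (T s x) < e"
      using b(1) by blast
  qed
qed

lemma subspace_E_aap: "subspace (E_aap T)"
proof (rule subspaceI)
  let ?K = "\<lambda>x. closure ((\<lambda>s. T s x) ` {0..})"
  have orbit: "T s x \<in> ?K x" if "s \<ge> 0" for s x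
    using that by (auto intro: closure_subset[THEN subsetD])
  show "0 \<in> E_aap T"
    using linear_0[OF linear_T] by (intro E_aap_if_orbit_subset_compact[of "{0}"]) auto
  show "x + y \<in> E_aap T" if "x \<in> E_aap T" "y \<in> E_aap T" for x y
  proof (rule E_aap_if_orbit_subset_compact)
    show "compact {a + b |a b. a \<in> ?K x \<and> b \<in> ?K y}"
      using that unfolding E_aap_def by (intro compact_sums) auto
    show "T s (x + y) \<in> {a + b |a b. a \<in> ?K x \<and> b \<in> ?K y}" if "s \<ge> 0" for s
      using orbit[OF that] linear_add[OF linear_T[OF that]] by blast
  qed
  show "c *\<^sub>R x \<in> E_aap T" if "x \<in> E_aap T" for c x
  proof (rule E_aap_if_orbit_subset_compact)
    show "compact ((\<lambda>v. c *\<^sub>R v) ` ?K x)"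
      using that unfolding E_aap_def by (intro compact_scaling) auto
    show "T s (c *\<^sub>R x) \<in> (\<lambda>v. c *\<^sub>R v) ` ?K x" if "s \<ge> 0" for s
      using orbit[OF that] linear_scale[OF linear_T[OF that]] by auto
  qed
qed

lemma periodic_in_E_aap:
  assumes a: "a > 0" "T a y = y"
  shows "y \<in> E_aap T"
proof (rule E_aap_if_orbit_subset_compact)
  show "compact ((\<lambda>s. T s y) ` {0..a})"
    by (rule compact_continuous_image[OF continuous_on_subset[OF continuous_on_orbit]]) auto
  show "T s y \<in> (\<lambda>s. T s y) ` {0..a}" if s: "s \<ge> 0" for s
  proof -
    define k where "k = nat \<lfloor>s / a\<rfloor>"
    have "real k = of_int \<lfloor>s / a\<rfloor>" using s a unfolding k_def by simp
    then have r: "0 \<le> s - real k * a" "s - real k * a \<le> a"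
      using floor_divide_lower[OF a(1), of s] floor_divide_upper[OF a(1), of s]
      by (simp_all add: algebra_simps)
    have "T s y = T (s - real k * a) (T (real k * a) y)"
      using T_add[of "s - real k * a" "real k * a" y] r a by simp
    then show ?thesis using T_multiple_fixed[of a y k] r a by simp
  qed
qed

lemma ergodic_mean_defect_tendsto_0:
  assumes "a \<ge> 0"
  shows "(\<lambda>N. T a (ergodic_mean T a N x) - ergodic_mean T a N x) \<longlonglongrightarrow> 0"
proof -
  obtain M where M: "\<And>s y. s \<ge> 0 \<Longrightarrow> norm (T s y) \<le> M * norm y"
    using norm_T_bound by blast
  let ?c = "M * norm x + norm x"
  have "\<forall>\<^sub>F N in sequentially.
          norm (T a (ergodic_mean T a N x) - ergodic_mean T a N x) \<le> ?c * inverse (real (Suc N))"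
  proof (intro always_eventually allI)
    fix N
    have "norm (T (real (Suc N) * a) x - x) \<le> ?c"
      using norm_triangle_ineq4[of "T (real (Suc N) * a) x" x] M[of "real (Suc N) * a" x] assms
      by simp
    then show "norm (T a (ergodic_mean T a N x) - ergodic_mean T a N x) \<le> ?c * inverse (real (Suc N))"
      unfolding ergodic_mean_defect[OF assms]
      by (simp add: divide_inverse mult.commute mult_left_mono)
  qed
  moreover have "(\<lambda>N. ?c * inverse (real (Suc N))) \<longlonglongrightarrow> 0"
    using tendsto_mult[OF tendsto_const LIMSEQ_inverse_real_of_nat, of ?c] by simp
  ultimately show ?thesis by (rule Lim_null_comparison)
qed

lemma periodic_component:
  assumes x: "x \<in> E_aap T" and a: "a > 0"
    and Q: "bounded_linear Q" "\<And>s y. s \<ge> 0 \<Longrightarrow> Q (T s y) = T s (Q y)"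
    and Qx: "T a (Q x) = Q x"
  obtains p where "p \<in> E_aap T" "T a p = p" "Q p = Q x"
proof -
  let ?mean = "\<lambda>N. ergodic_mean T a N x"
  define C where "C = closure (convex hull (closure ((\<lambda>s. T s x) ` {0..})))"
  have C: "compact C"
    unfolding C_def using x by (intro compact_closure_convex_hull) (simp add: E_aap_def)
  have hull_C: "convex hull ((\<lambda>s. T s x) ` {0..}) \<subseteq> C"
    unfolding C_def by (meson closure_subset hull_mono order_trans)
  have translate_in_C: "T s (?mean N) \<in> C" if "s \<ge> 0" for s N
    using T_ergodic_mean_in_convex_hull_orbit[of a s] a that hull_C by auto
  have "?mean N \<in> C" for N
    using translate_in_C[of 0] by simp
  then obtain p r where r: "strict_mono r" and lim: "(?mean \<circ> r) \<longlonglongrightarrow> p"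
    using compact_imp_seq_compact[OF C] unfolding seq_compact_def by meson
  have lim_T: "(\<lambda>j. T s (?mean (r j))) \<longlonglongrightarrow> T s p" if "s \<ge> 0" for s
    using bounded_linear.tendsto[OF bounded_linear_T[OF that] lim] by (simp add: o_def)
  have "(\<lambda>j. T a (?mean (r j)) - ?mean (r j)) \<longlonglongrightarrow> 0"
    using LIMSEQ_subseq_LIMSEQ[OF ergodic_mean_defect_tendsto_0 r] a by (simp add: o_def)
  moreover have "(\<lambda>j. T a (?mean (r j)) - ?mean (r j)) \<longlonglongrightarrow> T a p - p"
    using tendsto_diff[OF lim_T lim] a by (simp add: o_def)
  ultimately have "T a p = p"
    using LIMSEQ_unique by fastforce
  moreover have "Q p = Q x"
  proof -
    have "Q (?mean N) = Q x" for N
      using a Qx Q by (simp add: ergodic_mean_commute bounded_linear.linear ergodic_mean_fixed)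
    then show ?thesis
      using bounded_linear.tendsto[OF Q(1) lim] by (simp add: o_def LIMSEQ_const_iff)
  qed
  moreover have "p \<in> E_aap T"
  proof (rule E_aap_if_orbit_subset_compact[OF C])
    show "T s p \<in> C" if "s \<ge> 0" for s
      using closed_sequentially[OF compact_imp_closed[OF C] _ lim_T[OF that]]
        translate_in_C[OF that] by blast
  qed
  ultimately show ?thesis using that by blast
qed

lemma E_aap_kernel_prod_ops_decompose:
  "\<forall>i<n. t i > 0 \<Longrightarrow> x \<in> E_aap T \<Longrightarrow> prod_ops T t n x = 0 \<Longrightarrow>
   \<exists>xs. (\<forall>i<n. T (t i) (xs i) = xs i) \<and> x = (\<Sum>i<n. xs i)"
proof (induction n arbitrary: x)
  case (Suc m)
  let ?Q = "prod_ops T t m"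
  have t: "\<forall>i<m. t i \<ge> 0" "t m > 0" using Suc.prems(1) by (simp_all add: less_imp_le)
  have Q: "bounded_linear ?Q" using bounded_linear_prod_ops[OF t(1)] .
  have "T (t m) (?Q x) = ?Q x"
    using Suc.prems(3) prod_ops_commute[OF t(1), of "t m" x] t(2)
      linear_diff[OF bounded_linear.linear[OF Q]] by simp
  then obtain p where p: "p \<in> E_aap T" "T (t m) p = p" "?Q p = ?Q x"
    using periodic_component[OF Suc.prems(2) t(2) Q prod_ops_commute[OF t(1)]] by blast
  have "x - p \<in> E_aap T" "?Q (x - p) = 0"
    using subspace_diff[OF subspace_E_aap Suc.prems(2) p(1)] p(3)
      linear_diff[OF bounded_linear.linear[OF Q]] by simp_all
  then obtain xs where xs: "\<forall>i<m. T (t i) (xs i) = xs i" "x - p = (\<Sum>i<m. xs i)"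
    using Suc.IH Suc.prems(1) by force
  have "x = (\<Sum>i<Suc m. (xs(m := p)) i)" "\<forall>i<Suc m. T (t i) ((xs(m := p)) i) = (xs(m := p)) i"
    using xs p(2) by (auto simp: algebra_simps less_Suc_eq intro!: sum.cong)
  then show ?case by blast
qed simp

lemma sum_fixed_in_E_aap_kernel_prod_ops:
  assumes "\<forall>i<n. t i > 0" "\<forall>i<n. T (t i) (xs i) = xs i"
  shows "(\<Sum>i<n. xs i) \<in> E_aap T" "prod_ops T t n (\<Sum>i<n. xs i) = 0"
proof -
  show "(\<Sum>i<n. xs i) \<in> E_aap T"
    using assms periodic_in_E_aap by (intro subspace_sum[OF subspace_E_aap]) blast
  have t: "\<forall>i<n. t i \<ge> 0" using assms(1) by (simp add: less_imp_le)
  show "prod_ops T t n (\<Sum>i<n. xs i) = 0"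
    using assms(2) prod_ops_eq_0_if_fixed[OF t]
    by (simp add: linear_sum[OF bounded_linear.linear[OF bounded_linear_prod_ops[OF t]]])
qed

end

theorem lemma2p3:
  fixes T :: "real \<Rightarrow> 'a::banach \<Rightarrow> 'a" and t :: "nat \<Rightarrow> real" and n :: nat
  assumes "c0_semigroup T" and "bounded_semigroup T"
    and "\<forall>i<n. t i > 0"
  shows "E_aap T \<inter> kernel_of (prod_ops T t n) =
    {y. \<exists>x. (\<forall>i<n. x i \<in> kernel_of (\<lambda>z. T (t i) z - z)) \<and> y = (\<Sum>i<n. x i)}"
proof -
  interpret bounded_C0_semigroup T
    using assms(1,2) by unfold_locales
  show ?thesis
    using E_aap_kernel_prod_ops_decompose[OF assms(3)]
      sum_fixed_in_E_aap_kernel_prod_ops[OF assms(3)]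
    unfolding kernel_of_def by auto
qed

end
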